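(* Let $k\ge1$ and let $B\in\mathfrak{gl}_n(\mathbb C)$ satisfy $B[B,B^*]=-B$, $B^k\neq0$, $B^{k+1}=0$. If $B'=hBh^{-1}$ for some $h\in\mathrm{GL}_n(\mathbb C)$ and $B'$ also satisfies $B'[B',B'^*]=-B'$, then $B'=UBU^{-1}$ for some $U\in\mathrm U(n)$.
   Context: $B^*$ is the conjugate transpose, $[X,Y]=XY-YX$. *)

theory Defs
  imports "HOL-Analysis.Analysis"
begin

text \<open>Square complex matrices of size n are modelled as complex ^'n ^'n (n = CARD('n)).
  Note: * on this type is componentwise, so matrix product is ** and matrix power is
  defined below.\<close>

primrec matpow :: "'a::semiring_1 ^'n ^'n \<Rightarrow> nat \<Rightarrow> 'a ^'n ^'n" where
  "matpow A 0 = mat 1"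
| "matpow A (Suc k) = A ** matpow A k"

definition conj_transpose :: "complex ^'n ^'m \<Rightarrow> complex ^'m ^'n" where
  "conj_transpose A = (\<chi> i j. cnj (A $ j $ i))"

definition commutator :: "'a::ring_1 ^'n ^'n \<Rightarrow> 'a ^'n ^'n \<Rightarrow> 'a ^'n ^'n" where
  "commutator X Y = X ** Y - Y ** X"

definition unitary_mat :: "complex ^'n ^'n \<Rightarrow> bool" where
  "unitary_mat U \<longleftrightarrow> U ** conj_transpose U = mat 1 \<and> conj_transpose U ** U = mat 1"

end

theory Submission
  imports Defs
begin

text \<open>Put C = B B*. The relation B[B,B*] = -B says [C,B] = B, and its adjoint says
  [C,B*] = -B*. Hence a primitive vector v (Bv = 0, Cv = mv) generates a string
  v, B*v, ..., B*^m v of pairwise orthogonal vectors with |B*^a v|^2 = m(m-1)...(m-a+1) |v|^2,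
  and B*^(m+1) v = 0. The strings of a maximal orthonormal family of primitive vectors form an
  orthogonal basis, because nilpotency of B produces a new primitive vector in any nonzero vector
  orthogonal to all of them. Then dim ker B^j counts the basis vectors B*^a v with a < j, so the
  similar matrices B and B' have the same number of strings of each length. Matching the strings
  of B with those of B' preserves all inner products, so it defines a unitary U with
  U B* = B'* U.\<close>

section \<open>Hermitian inner product and adjoints\<close>

text \<open>HOL-Analysis only provides the real part of this form as the inner product on complex^'n;
  complex orthogonality is needed for linear independence over the complex numbers.\<close>

definition cinner :: "complex^'n \<Rightarrow> complex^'n \<Rightarrow> complex" where
  "cinner x y = (\<Sum>i\<in>UNIV. x$i * cnj (y$i))"

lemma cinner_adjoint: "cinner (A *v x) y = cinner x (conj_transpose A *v y)"
proof -
  have "cinner (A *v x) y = (\<Sum>i\<in>UNIV. \<Sum>j\<in>UNIV. A$i$j * x$j * cnj (y$i))"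
    unfolding cinner_def matrix_vector_mult_def by (simp add: sum_distrib_right)
  also have "\<dots> = (\<Sum>j\<in>UNIV. \<Sum>i\<in>UNIV. A$i$j * x$j * cnj (y$i))"
    by (rule sum.swap)
  also have "\<dots> = cinner x (conj_transpose A *v y)"
    unfolding cinner_def matrix_vector_mult_def conj_transpose_def
    by (simp add: sum_distrib_left mult_ac)
  finally show ?thesis .
qed

lemma cinner_diff_left: "cinner (x - y) z = cinner x z - cinner y z"
  by (simp add: cinner_def algebra_simps sum_subtractf)

lemma cinner_scale_left: "cinner (c *s x) z = c * cinner x z"
  by (simp add: cinner_def algebra_simps sum_distrib_left)

lemma cinner_scale_right: "cinner z (c *s x) = cnj c * cinner z x"
  by (simp add: cinner_def algebra_simps sum_distrib_left)

lemma cinner_zero_left [simp]: "cinner 0 z = 0"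
  by (simp add: cinner_def)

lemma cinner_zero_right [simp]: "cinner z 0 = 0"
  by (simp add: cinner_def)

lemma cinner_sum_left: "cinner (\<Sum>i\<in>S. f i) z = (\<Sum>i\<in>S. cinner (f i) z)"
  by (induction S rule: infinite_finite_induct) (auto simp: cinner_def algebra_simps sum.distrib)

lemma cnj_cinner: "cnj (cinner x y) = cinner y x"
  by (simp add: cinner_def mult.commute)

lemma cinner_self: "cinner x x = of_real ((norm x)\<^sup>2)"
proof -
  have "(norm x)\<^sup>2 = (\<Sum>i\<in>UNIV. (norm (x$i))\<^sup>2)"
    by (simp add: norm_vec_def L2_set_def sum_nonneg)
  then show ?thesis
    unfolding cinner_def complex_norm_square [symmetric] by simp
qed

lemma cinner_self_eq_0 [simp]: "cinner x x = 0 \<longleftrightarrow> x = 0"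
  by (simp add: cinner_self)

lemma conj_transpose_mult: "conj_transpose (A ** B) = conj_transpose B ** conj_transpose A"
  by (simp add: conj_transpose_def matrix_matrix_mult_def vec_eq_iff mult.commute)

lemma conj_transpose_conj_transpose [simp]: "conj_transpose (conj_transpose A) = A"
  by (simp add: conj_transpose_def vec_eq_iff)

lemma conj_transpose_diff: "conj_transpose (A - B) = conj_transpose A - conj_transpose B"
  by (simp add: conj_transpose_def vec_eq_iff)

lemma conj_transpose_uminus: "conj_transpose (- A) = - conj_transpose A"
  by (simp add: conj_transpose_def vec_eq_iff)

lemma conj_transpose_mat_1 [simp]: "conj_transpose (mat 1) = mat 1"
  by (simp add: conj_transpose_def mat_def vec_eq_iff)

lemma matrix_vector_mult_uminus: "(- A) *v x = - (A *v (x::'a::ring_1^'n))"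
  by (simp add: vec_eq_iff matrix_vector_mult_def sum_negf)

declare matpow.simps(2) [simp del]

lemma matpow_Suc_vec: "matpow A (Suc t) *v x = A *v (matpow A t *v x)"
  by (simp add: matpow.simps(2) matrix_vector_mul_assoc)

lemma matpow_Suc_right: "matpow A (Suc t) = matpow A t ** A"
  by (induction t) (simp_all add: matpow.simps(2) matrix_mul_assoc)

lemma matpow_Suc_right_vec: "matpow A (Suc t) *v x = matpow A t *v (A *v x)"
  by (simp add: matpow_Suc_right matrix_vector_mul_assoc)

lemma matpow_add_vec: "matpow A (i + j) *v x = matpow A i *v (matpow A j *v x)"
  by (induction i) (simp_all add: matpow_Suc_vec)

lemma conj_transpose_matpow: "conj_transpose (matpow A j) = matpow (conj_transpose A) j"
  by (induction j) (simp_all add: matpow.simps(2) conj_transpose_mult flip: matpow_Suc_right)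

lemma invertible_matrix_inv:
  assumes "invertible A"
  shows "A ** matrix_inv A = mat 1" "matrix_inv A ** A = mat 1"
  using someI_ex [OF assms [unfolded invertible_def]] by (simp_all add: matrix_inv_def)

lemma matpow_similar:
  assumes "invertible h"
  shows "matpow (h ** A ** matrix_inv h) t = h ** matpow A t ** matrix_inv h"
proof (induction t)
  case (Suc t)
  have "h ** A ** matrix_inv h ** (h ** matpow A t ** matrix_inv h)
      = h ** A ** (matrix_inv h ** h) ** matpow A t ** matrix_inv h"
    by (simp add: matrix_mul_assoc)
  then show ?case
    using Suc invertible_matrix_inv [OF assms] by (simp add: matpow.simps(2) matrix_mul_assoc)
qed (use invertible_matrix_inv [OF assms] in simp)

lemma cinner_adjoint_matpow:
  "cinner (matpow A j *v x) y = cinner x (matpow (conj_transpose A) j *v y)"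
  by (simp add: cinner_adjoint conj_transpose_matpow)

section \<open>Orthogonal bases\<close>

lemma orthogonal_independent:
  assumes "\<forall>x\<in>S. x \<noteq> 0" "\<forall>x\<in>S. \<forall>y\<in>S. x \<noteq> y \<longrightarrow> cinner x y = 0"
  shows "vec.independent S"
proof
  assume "vec.dependent S"
  then obtain T u v where T: "finite T" "T \<subseteq> S" "(\<Sum>x\<in>T. u x *s x) = 0" "v \<in> T" "u v \<noteq> 0"
    unfolding vec.dependent_explicit by blast
  have "cinner (\<Sum>x\<in>T. u x *s x) v = (\<Sum>x\<in>T. u x * cinner x v)"
    by (simp add: cinner_sum_left cinner_scale_left)
  also have "\<dots> = u v * cinner v v"
  proof -
    have "\<forall>x\<in>T - {v}. cinner x v = 0"
      using T assms(2) by blast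
    then show ?thesis
      using T by (subst sum.remove [of T v]) auto
  qed
  finally show False
    using T assms(1) by auto
qed

definition orthonormal :: "(complex^'n) set \<Rightarrow> bool" where
  "orthonormal S \<longleftrightarrow> (\<forall>x\<in>S. cinner x x = 1) \<and> (\<forall>x\<in>S. \<forall>y\<in>S. x \<noteq> y \<longrightarrow> cinner x y = 0)"

lemma orthonormal_finite_card:
  fixes S :: "(complex^'n) set"
  assumes "orthonormal S"
  shows "finite S" "card S \<le> vec.dim (UNIV :: (complex^'n) set)"
proof -
  have indep: "vec.independent S"
    using assms by (intro orthogonal_independent) (auto simp: orthonormal_def)
  then show "finite S"
    by (rule vec.finiteI_independent)
  show "card S \<le> vec.dim (UNIV :: (complex^'n) set)"
    using indep by (rule vec.independent_card_le_dim [OF subset_UNIV])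
qed

definition orth_basis :: "'i set \<Rightarrow> ('i \<Rightarrow> complex^'n) \<Rightarrow> bool" where
  "orth_basis I b \<longleftrightarrow> finite I \<and> (\<forall>i\<in>I. b i \<noteq> 0) \<and>
     (\<forall>i\<in>I. \<forall>j\<in>I. i \<noteq> j \<longrightarrow> cinner (b i) (b j) = 0) \<and>
     (\<forall>x. (\<forall>i\<in>I. cinner x (b i) = 0) \<longrightarrow> x = 0)"

lemma sum_cinner_orth_basis:
  assumes "orth_basis I b" "j \<in> I"
  shows "(\<Sum>i\<in>I. f i * cinner (b i) (b j)) = f j * cinner (b j) (b j)"
  using assms by (subst sum.remove [of I j]) (auto intro!: sum.neutral simp: orth_basis_def)

lemma orth_basis_expand:
  assumes "orth_basis I b"
  shows "x = (\<Sum>i\<in>I. (cinner x (b i) / cinner (b i) (b i)) *s b i)"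
proof -
  let ?y = "x - (\<Sum>i\<in>I. (cinner x (b i) / cinner (b i) (b i)) *s b i)"
  have "cinner ?y (b j) = 0" if "j \<in> I" for j
    using sum_cinner_orth_basis [OF assms that, of "\<lambda>i. cinner x (b i) / cinner (b i) (b i)"]
      assms that
    by (simp add: cinner_diff_left cinner_sum_left cinner_scale_left orth_basis_def)
  then have "?y = 0"
    using assms unfolding orth_basis_def by blast
  then show ?thesis by simp
qed

lemma matrix_vector_mult_sum: "(M::'a::field^'n^'m) *v (\<Sum>i\<in>S. f i) = (\<Sum>i\<in>S. M *v f i)"
  by (induction S rule: infinite_finite_induct) (auto simp: matrix_vector_right_distrib)

lemma orth_basis_matrix_eq:
  assumes "orth_basis I b" "\<forall>i\<in>I. M *v b i = N *v b i"
  shows "M = N"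
  unfolding matrix_eq
proof
  fix x
  let ?c = "\<lambda>i. cinner x (b i) / cinner (b i) (b i)"
  have "M *v x = (\<Sum>i\<in>I. ?c i *s (M *v b i))"
    by (subst orth_basis_expand [OF assms(1), of x]) (simp add: matrix_vector_mult_sum vector_scalar_commute)
  also have "\<dots> = (\<Sum>i\<in>I. ?c i *s (N *v b i))"
    using assms(2) by simp
  also have "\<dots> = N *v x"
    by (subst (2) orth_basis_expand [OF assms(1), of x]) (simp add: matrix_vector_mult_sum vector_scalar_commute)
  finally show "M *v x = N *v x" .
qed

lemma orth_basis_span:
  assumes "orth_basis I b" "J \<subseteq> I" "\<forall>i\<in>I - J. cinner x (b i) = 0"
  shows "x \<in> vec.span (b ` J)"
proof -
  have "finite I"
    using assms(1) by (simp add: orth_basis_def)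
  have "x = (\<Sum>i\<in>I. (cinner x (b i) / cinner (b i) (b i)) *s b i)"
    using assms(1) by (rule orth_basis_expand)
  also have "\<dots> = (\<Sum>i\<in>J. (cinner x (b i) / cinner (b i) (b i)) *s b i)"
    using \<open>finite I\<close> assms(2,3) by (intro sum.mono_neutral_right) auto
  also have "\<dots> \<in> vec.span (b ` J)"
    by (intro vec.span_sum vec.span_scale vec.span_base) auto
  finally show ?thesis .
qed

lemma orth_basis_dim_span:
  assumes "orth_basis I b" "J \<subseteq> I"
  shows "vec.dim (vec.span (b ` J)) = card J"
proof -
  have "inj_on b I"
  proof (rule inj_onI)
    fix i j assume "i \<in> I" "j \<in> I" "b i = b j"
    then show "i = j"
      using assms(1) unfolding orth_basis_def by (metis cinner_self_eq_0)
  qed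
  have "vec.independent (b ` J)"
  proof (rule orthogonal_independent)
    show "\<forall>x\<in>b ` J. x \<noteq> 0"
      using assms by (auto simp: orth_basis_def)
    show "\<forall>x\<in>b ` J. \<forall>y\<in>b ` J. x \<noteq> y \<longrightarrow> cinner x y = 0"
      using assms unfolding orth_basis_def by (metis (no_types, lifting) imageE subsetD)
  qed
  then have "vec.dim (vec.span (b ` J)) = card (b ` J)"
    by (rule vec.dim_span_eq_card_independent)
  also have "\<dots> = card J"
    using \<open>inj_on b I\<close> assms(2) by (simp add: card_image inj_on_subset)
  finally show ?thesis .
qed

definition basis_map :: "'i set \<Rightarrow> ('i \<Rightarrow> complex^'n) \<Rightarrow> ('i \<Rightarrow> complex^'n) \<Rightarrow> complex^'n^'n"
  where "basis_map I b c = (\<chi> r s. \<Sum>i\<in>I. c i $ r * cnj (b i $ s) / cinner (b i) (b i))"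

lemma basis_map_vec:
  "basis_map I b c *v x = (\<Sum>i\<in>I. (cinner x (b i) / cinner (b i) (b i)) *s c i)"
  by (simp add: basis_map_def matrix_vector_mult_def cinner_def vec_eq_iff sum_distrib_left
      sum_distrib_right sum_divide_distrib mult_ac sum.swap [of _ I])

lemma orth_basis_basis_map:
  assumes "orth_basis I b" "j \<in> I"
  shows "basis_map I b c *v b j = c j"
proof -
  have "cinner (b j) (b i) = 0" if "i \<in> I" "i \<noteq> j" for i
    using assms that by (simp add: orth_basis_def)
  then have "basis_map I b c *v b j = (cinner (b j) (b j) / cinner (b j) (b j)) *s c j"
    unfolding basis_map_vec using assms
    by (subst sum.remove [of I j]) (auto intro!: sum.neutral simp: orth_basis_def)
  then show ?thesis
    using assms by (simp add: orth_basis_def)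
qed

lemma conj_transpose_basis_map:
  assumes "\<forall>i\<in>I. cinner (c i) (c i) = cinner (b i) (b i)"
  shows "conj_transpose (basis_map I b c) = basis_map I c b"
  unfolding conj_transpose_def basis_map_def vec_eq_iff
  using assms by (auto simp: cnj_cinner mult.commute intro!: sum.cong)

lemma unitary_basis_map:
  assumes b: "orth_basis I b" and c: "\<forall>i\<in>I. \<forall>j\<in>I. cinner (c i) (c j) = cinner (b i) (b j)"
  shows "unitary_mat (basis_map I b c)"
proof -
  let ?U = "basis_map I b c"
  have "(conj_transpose ?U ** ?U) *v b j = mat 1 *v b j" if "j \<in> I" for j
  proof -
    have "(conj_transpose ?U ** ?U) *v b j = basis_map I c b *v c j"
      using b c that
      by (simp add: conj_transpose_basis_map orth_basis_basis_map flip: matrix_vector_mul_assoc)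
    also have "\<dots> = basis_map I b b *v b j"
      using c that by (simp add: basis_map_vec)
    also have "\<dots> = mat 1 *v b j"
      using b that by (simp add: orth_basis_basis_map)
    finally show ?thesis .
  qed
  then have "conj_transpose ?U ** ?U = mat 1"
    using b by (intro orth_basis_matrix_eq) auto
  then show ?thesis
    unfolding unitary_mat_def using matrix_left_right_inverse by blast
qed

lemma unitary_matrix_inv:
  assumes "unitary_mat U"
  shows "matrix_inv U = conj_transpose U"
proof -
  have "invertible U"
    using assms unfolding unitary_mat_def invertible_def by blast
  then have "matrix_inv U ** (U ** conj_transpose U) = conj_transpose U"
    by (simp add: matrix_mul_assoc invertible_matrix_inv)
  then show ?thesis
    using assms by (simp add: unitary_mat_def)
qed

section \<open>Strings of a ladder matrix\<close>

definition falling_factorial :: "nat \<Rightarrow> nat \<Rightarrow> complex" where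
  "falling_factorial m a = (\<Prod>t<a. of_nat m - of_nat t)"

lemma falling_factorial_Suc: "falling_factorial m (Suc a) = falling_factorial m a * (of_nat m - of_nat a)"
  by (simp add: falling_factorial_def)

lemma falling_factorial_eq_0_iff: "falling_factorial m a = 0 \<longleftrightarrow> m < a"
  by (auto simp: falling_factorial_def)

locale ladder =
  fixes B :: "complex^'n^'n" and k :: nat
  assumes ladder_relation: "B ** commutator B (conj_transpose B) = - B"
    and nilpotent: "matpow B (Suc k) = 0"
begin

abbreviation "Bs \<equiv> conj_transpose B"
abbreviation "C \<equiv> B ** Bs"

lemma C_mult_B: "C *v (B *v x) = B *v (C *v x) + B *v x"
proof -
  have "(B ** (B ** Bs - Bs ** B)) *v x = (- B) *v x"
    using ladder_relation by (simp add: commutator_def)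
  then show ?thesis
    by (simp add: algebra_simps matrix_vector_mult_uminus flip: matrix_vector_mul_assoc)
qed

lemma C_mult_Bs: "C *v (Bs *v x) = Bs *v (C *v x) - Bs *v x"
proof -
  have "conj_transpose (B ** (B ** Bs - Bs ** B)) = conj_transpose (- B)"
    using ladder_relation by (simp add: commutator_def)
  then have "((B ** Bs - Bs ** B) ** Bs) *v x = (- Bs) *v x"
    by (simp add: conj_transpose_mult conj_transpose_diff conj_transpose_uminus)
  then show ?thesis
    by (simp add: algebra_simps matrix_vector_mult_uminus flip: matrix_vector_mul_assoc)
qed

lemma C_mult_matpow_B: "C *v (matpow B t *v u) = matpow B t *v (C *v u) + of_nat t *s (matpow B t *v u)"
proof (induction t)
  case (Suc t)
  have "C *v (matpow B (Suc t) *v u) = B *v (C *v (matpow B t *v u)) + B *v (matpow B t *v u)"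
    by (simp add: matpow_Suc_vec C_mult_B)
  also have "\<dots> = matpow B (Suc t) *v (C *v u) + of_nat (Suc t) *s (matpow B (Suc t) *v u)"
    by (simp add: Suc matpow_Suc_vec vector_scalar_commute algebra_simps)
  finally show ?case .
qed simp

lemma C_mult_matpow_Bs: "C *v (matpow Bs t *v u) = matpow Bs t *v (C *v u) - of_nat t *s (matpow Bs t *v u)"
proof (induction t)
  case (Suc t)
  have "C *v (matpow Bs (Suc t) *v u) = Bs *v (C *v (matpow Bs t *v u)) - Bs *v (matpow Bs t *v u)"
    by (simp add: matpow_Suc_vec C_mult_Bs)
  also have "\<dots> = matpow Bs (Suc t) *v (C *v u) - of_nat (Suc t) *s (matpow Bs (Suc t) *v u)"
    by (simp add: Suc matpow_Suc_vec vector_scalar_commute algebra_simps)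
  finally show ?case .
qed simp

lemma C_mult_lowered:
  assumes "C *v u = \<mu> *s u"
  shows "C *v (matpow Bs a *v u) = (\<mu> - of_nat a) *s (matpow Bs a *v u)"
  using assms by (simp add: C_mult_matpow_Bs vector_scalar_commute)

lemma B_mult_lowered:
  assumes "C *v u = \<mu> *s u"
  shows "B *v (matpow Bs (Suc a) *v u) = (\<mu> - of_nat a) *s (matpow Bs a *v u)"
  using C_mult_lowered [OF assms, of a] by (simp add: matpow_Suc_vec flip: matrix_vector_mul_assoc)

lemma cinner_lowered:
  assumes "B *v v = 0" "B *v w = 0" "C *v w = of_nat m *s w"
  shows "cinner (matpow Bs a *v v) (matpow Bs b *v w) =
    (if a = b then falling_factorial m a * cinner v w else 0)"
proof (induction a arbitrary: b)
  case 0
  show ?case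
  proof (cases b)
    case (Suc b')
    have "cinner v (matpow Bs (Suc b') *v w) = cinner (matpow B (Suc b') *v v) w"
      by (simp only: cinner_adjoint_matpow)
    then show ?thesis
      using Suc assms(1) by (simp add: matpow_Suc_right_vec [of B])
  qed (simp add: falling_factorial_def)
next
  case (Suc a)
  show ?case
  proof (cases b)
    case 0
    have "cinner (matpow Bs (Suc a) *v v) w = cinner (matpow Bs a *v v) (B *v w)"
      by (simp add: matpow_Suc_vec cinner_adjoint)
    then show ?thesis
      using 0 assms(2) by simp
  next
    case (Suc b')
    have "cinner (matpow Bs (Suc a) *v v) (matpow Bs b *v w)
        = cinner (matpow Bs a *v v) (B *v (matpow Bs (Suc b') *v w))"
      using Suc by (simp add: matpow_Suc_vec cinner_adjoint)
    also have "\<dots> = (of_nat m - of_nat b') * cinner (matpow Bs a *v v) (matpow Bs b' *v w)"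
      by (simp only: B_mult_lowered [OF assms(3)] cinner_scale_right) simp
    finally show ?thesis
      using Suc by (simp add: Suc.IH falling_factorial_Suc)
  qed
qed

lemma lowered_eq_0:
  assumes "B *v v = 0" "C *v v = of_nat m *s v" "m < a"
  shows "matpow Bs a *v v = 0"
proof -
  have "falling_factorial m a = 0"
    using assms(3) by (simp add: falling_factorial_eq_0_iff)
  then show ?thesis
    using cinner_lowered [OF assms(1,1,2), of a a] by simp
qed

lemma matpow_B_lowered:
  assumes "B *v v = 0" "C *v v = \<mu> *s v" "a < j"
  shows "matpow B j *v (matpow Bs a *v v) = 0"
  using assms(3)
proof (induction a arbitrary: j)
  case 0
  then obtain j' where "j = Suc j'"
    using less_imp_Suc_add by blast
  then show ?case
    using assms(1) by (simp add: matpow_Suc_right_vec)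
next
  case (Suc a)
  then obtain j' where j: "j = Suc j'" "a < j'"
    by (metis Suc_lessE)
  have "matpow B j *v (matpow Bs (Suc a) *v v) = (\<mu> - of_nat a) *s (matpow B j' *v (matpow Bs a *v v))"
    by (simp add: j matpow_Suc_right_vec [of B] B_mult_lowered [OF assms(2)] vector_scalar_commute
        del: vector_sub_rdistrib)
  then show ?case
    using Suc.IH [OF j(2)] by simp
qed

definition primitive :: "complex^'n \<Rightarrow> bool" where
  "primitive v \<longleftrightarrow> B *v v = 0 \<and> (\<exists>m. C *v v = of_nat m *s v)"

definition weight :: "complex^'n \<Rightarrow> nat" where
  "weight v = (SOME m. C *v v = of_nat m *s v)"

lemma primitiveD:
  assumes "primitive v"
  shows "B *v v = 0" "C *v v = of_nat (weight v) *s v"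
  using assms someI_ex [of "\<lambda>m. C *v v = of_nat m *s v"]
  by (auto simp: primitive_def weight_def)

lemma primitive_scale: "primitive v \<Longrightarrow> primitive (c *s v)"
  unfolding primitive_def
  by (metis vector_scalar_commute vector_smult_assoc mult.commute vector_smult_rzero)

definition primitive_orthonormal :: "(complex^'n) set \<Rightarrow> bool" where
  "primitive_orthonormal F \<longleftrightarrow> orthonormal F \<and> (\<forall>v\<in>F. primitive v)"

definition string_index :: "(complex^'n) set \<Rightarrow> ((complex^'n) \<times> nat) set" where
  "string_index F = Sigma F (\<lambda>v. {..weight v})"

definition string_vec :: "(complex^'n) \<times> nat \<Rightarrow> complex^'n" where
  "string_vec = (\<lambda>(v, a). matpow Bs a *v v)"

lemma cinner_string_vec:
  assumes "primitive_orthonormal F" "v \<in> F" "w \<in> F"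
  shows "cinner (string_vec (v, a)) (string_vec (w, b)) =
    (if (v, a) = (w, b) then falling_factorial (weight v) a else 0)"
proof -
  have "primitive v" "primitive w"
    using assms by (auto simp: primitive_orthonormal_def)
  then show ?thesis
    using assms cinner_lowered [OF primitiveD(1) primitiveD, of v w a b]
    by (auto simp: primitive_orthonormal_def orthonormal_def string_vec_def)
qed

lemma string_vec_eq_0: "primitive v \<Longrightarrow> weight v < a \<Longrightarrow> string_vec (v, a) = 0"
  unfolding string_vec_def by (auto intro: lowered_eq_0 dest: primitiveD)

lemma obtain_primitive_in_orbit:
  assumes "B *v y = 0" "y \<noteq> 0"
  obtains t where "primitive (matpow B t *v (matpow Bs t *v y))"
    and "matpow B t *v (matpow Bs t *v y) \<noteq> 0"
proof -
  define z where "z t = matpow B t *v (matpow Bs t *v y)" for t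
  have z_Suc: "z (Suc t) = C *v z t - of_nat t *s z t" for t
  proof -
    have "z (Suc t) = matpow B t *v (B *v (Bs *v (matpow Bs t *v y)))"
      by (simp only: z_def matpow_Suc_right_vec [of B] matpow_Suc_vec [of Bs])
    also have "\<dots> = matpow B t *v (C *v (matpow Bs t *v y))"
      by (simp only: matrix_vector_mul_assoc [of B Bs])
    finally show ?thesis
      by (simp add: z_def C_mult_matpow_B)
  qed
  have Bz: "B *v z t = 0" for t
  proof (induction t)
    case (Suc t)
    then show ?case
      using C_mult_B [of "z t"] by (simp add: z_Suc matrix_vector_mult_diff_distrib vector_scalar_commute)
  qed (simp add: z_def assms(1))
  have "z (Suc k) = 0" "z 0 \<noteq> 0"
    by (simp_all add: z_def nilpotent assms(2))
  then obtain t where t: "z t \<noteq> 0" "z (Suc t) = 0"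
    using ex_least_nat_less [of "\<lambda>t. z t = 0"] by blast
  then have "C *v z t = of_nat t *s z t"
    by (simp add: z_Suc)
  then have "primitive (z t)"
    using Bz by (auto simp: primitive_def)
  with t(1) show ?thesis
    using that by (simp add: z_def)
qed

definition string_complement :: "(complex^'n) set \<Rightarrow> (complex^'n) set" where
  "string_complement F = {x. \<forall>v\<in>F. \<forall>a. cinner x (string_vec (v, a)) = 0}"

lemma string_complement_B: "x \<in> string_complement F \<Longrightarrow> B *v x \<in> string_complement F"
  by (simp add: string_complement_def string_vec_def cinner_adjoint flip: matpow_Suc_vec)

lemma string_complement_Bs:
  assumes "\<forall>v\<in>F. primitive v" "x \<in> string_complement F"
  shows "Bs *v x \<in> string_complement F"
  unfolding string_complement_def string_vec_def
proof (intro CollectI ballI allI, unfold prod.case)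
  fix v a assume "v \<in> F"
  then have v: "B *v v = 0" "C *v v = of_nat (weight v) *s v"
    using assms(1) primitiveD by auto
  show "cinner (Bs *v x) (matpow Bs a *v v) = 0"
  proof (cases a)
    case (Suc a')
    have "cinner (Bs *v x) (matpow Bs a *v v) = cinner x (B *v (matpow Bs (Suc a') *v v))"
      by (simp add: Suc cinner_adjoint)
    also have "\<dots> = (of_nat (weight v) - of_nat a') * cinner x (matpow Bs a' *v v)"
      by (simp only: B_mult_lowered [OF v(2)] cinner_scale_right) simp
    finally show ?thesis
      using assms(2) \<open>v \<in> F\<close> by (simp add: string_complement_def string_vec_def)
  qed (simp add: cinner_adjoint v(1))
qed

lemma string_complement_matpow_B:
  "x \<in> string_complement F \<Longrightarrow> matpow B t *v x \<in> string_complement F"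
  by (induction t) (simp_all add: matpow_Suc_vec string_complement_B)

lemma string_complement_matpow_Bs:
  "\<forall>v\<in>F. primitive v \<Longrightarrow> x \<in> string_complement F \<Longrightarrow> matpow Bs t *v x \<in> string_complement F"
  by (induction t) (simp_all add: matpow_Suc_vec string_complement_Bs)

lemma obtain_primitive_in_string_complement:
  assumes "\<forall>v\<in>F. primitive v" "x \<in> string_complement F" "x \<noteq> 0"
  obtains z where "z \<in> string_complement F" "primitive z" "z \<noteq> 0"
proof -
  obtain j where j: "matpow B j *v x \<noteq> 0" "matpow B (Suc j) *v x = 0"
    using ex_least_nat_less [of "\<lambda>j. matpow B j *v x = 0" "Suc k"] assms(3)
    by (auto simp: nilpotent)
  then obtain t where "primitive (matpow B t *v (matpow Bs t *v (matpow B j *v x)))"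
    and "matpow B t *v (matpow Bs t *v (matpow B j *v x)) \<noteq> 0"
    using obtain_primitive_in_orbit [of "matpow B j *v x"] by (auto simp: matpow_Suc_vec)
  moreover have "matpow B t *v (matpow Bs t *v (matpow B j *v x)) \<in> string_complement F"
    using assms(1,2) by (intro string_complement_matpow_B string_complement_matpow_Bs)
  ultimately show ?thesis
    using that by blast
qed

lemma maximal_primitive_orthonormal_complete:
  assumes F: "primitive_orthonormal F"
    and max: "\<forall>G. primitive_orthonormal G \<longrightarrow> card G \<le> card F"
    and x: "x \<in> string_complement F"
  shows "x = 0"
proof (rule ccontr)
  assume "x \<noteq> 0"
  then obtain z where z: "z \<in> string_complement F" "primitive z" "z \<noteq> 0"
    using F x obtain_primitive_in_string_complement by (auto simp: primitive_orthonormal_def)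
  have "cinner z (string_vec (v, 0)) = 0" if "v \<in> F" for v
    using z(1) that unfolding string_complement_def by blast
  then have z_perp: "cinner z v = 0" "cinner v z = 0" if "v \<in> F" for v
    using that cnj_cinner [of z v] by (simp_all add: string_vec_def)
  define w where "w = of_real (1 / norm z) *s z"
  have "cinner w w = 1"
    unfolding w_def cinner_scale_left cinner_scale_right
    using z(3) by (simp add: cinner_self power2_eq_square flip: of_real_mult)
  moreover have "cinner w v = 0" "cinner v w = 0" if "v \<in> F" for v
    using z_perp [OF that] by (simp_all add: w_def cinner_scale_left cinner_scale_right)
  moreover have "primitive w"
    unfolding w_def by (rule primitive_scale [OF z(2)])
  ultimately have "primitive_orthonormal (insert w F)" "w \<notin> F"
    using F by (auto simp: primitive_orthonormal_def orthonormal_def)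
  moreover have "finite F"
    using F orthonormal_finite_card by (auto simp: primitive_orthonormal_def)
  ultimately show False
    using max by (metis card_insert_disjoint not_less_eq_eq order_refl)
qed

lemma exists_maximal_primitive_orthonormal:
  obtains F where "primitive_orthonormal F"
    and "\<forall>G. primitive_orthonormal G \<longrightarrow> card G \<le> card F"
proof -
  define P where "P n \<longleftrightarrow> (\<exists>F. primitive_orthonormal F \<and> card F = n)" for n
  have "P 0"
    unfolding P_def by (rule exI [of _ "{}"]) (simp add: primitive_orthonormal_def orthonormal_def)
  moreover have "\<forall>n. P n \<longrightarrow> n \<le> vec.dim (UNIV :: (complex^'n) set)"
    unfolding P_def using orthonormal_finite_card(2) by (auto simp: primitive_orthonormal_def)
  ultimately obtain n where "P n" "\<forall>m. P m \<longrightarrow> m \<le> n"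
    using Nat.ex_has_greatest_nat by blast
  then show ?thesis
    using that unfolding P_def by blast
qed

lemma exists_string_basis: "\<exists>F. primitive_orthonormal F \<and> orth_basis (string_index F) string_vec"
proof -
  obtain F where F: "primitive_orthonormal F"
    and max: "\<forall>G. primitive_orthonormal G \<longrightarrow> card G \<le> card F"
    by (rule exists_maximal_primitive_orthonormal)
  have prim: "\<forall>v\<in>F. primitive v"
    using F by (simp add: primitive_orthonormal_def)
  have "finite (string_index F)"
    using F orthonormal_finite_card by (auto simp: primitive_orthonormal_def string_index_def)
  moreover have "string_vec i \<noteq> 0" if i: "i \<in> string_index F" for i
  proof -
    obtain v a where "i = (v, a)" "v \<in> F" "a \<le> weight v"
      using i by (cases i) (auto simp: string_index_def)
    then have "cinner (string_vec i) (string_vec i) \<noteq> 0"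
      using cinner_string_vec [OF F] by (simp add: falling_factorial_eq_0_iff)
    then show ?thesis
      by auto
  qed
  moreover have "cinner (string_vec i) (string_vec j) = 0"
    if ij: "i \<in> string_index F" "j \<in> string_index F" "i \<noteq> j" for i j
  proof -
    obtain v a w b where "i = (v, a)" "j = (w, b)" "v \<in> F" "w \<in> F"
      using ij by (cases i, cases j) (auto simp: string_index_def)
    then show ?thesis
      using ij(3) cinner_string_vec [OF F] by auto
  qed
  moreover have "x = 0" if x: "\<forall>i\<in>string_index F. cinner x (string_vec i) = 0" for x
  proof -
    have "cinner x (string_vec (v, a)) = 0" if "v \<in> F" for v a
      using x that string_vec_eq_0 prim by (cases "a \<le> weight v") (auto simp: string_index_def)
    then have "x \<in> string_complement F"
      by (simp add: string_complement_def)
    then show ?thesis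
      using maximal_primitive_orthonormal_complete [OF F max] by blast
  qed
  ultimately show ?thesis
    using F unfolding orth_basis_def by blast
qed

lemma dim_kernel_matpow:
  assumes F: "primitive_orthonormal F" and basis: "orth_basis (string_index F) string_vec"
  shows "vec.dim {x. matpow B j *v x = 0} = card {i \<in> string_index F. snd i < j}"
proof -
  let ?J = "{i \<in> string_index F. snd i < j}"
  have "{x. matpow B j *v x = 0} = vec.span (string_vec ` ?J)"
  proof
    have "string_vec ` ?J \<subseteq> {x. matpow B j *v x = 0}"
      using F by (auto simp: string_index_def string_vec_def primitive_orthonormal_def
          intro!: matpow_B_lowered dest: primitiveD)
    then show "vec.span (string_vec ` ?J) \<subseteq> {x. matpow B j *v x = 0}"
      by (rule vec.span_minimal) (rule vec.subspace_kernel)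
  next
    show "{x. matpow B j *v x = 0} \<subseteq> vec.span (string_vec ` ?J)"
    proof
      fix x assume x: "x \<in> {x. matpow B j *v x = 0}"
      have "cinner x (string_vec i) = 0" if i: "i \<in> string_index F - ?J" for i
      proof -
        obtain v a where "i = (v, a)" "j \<le> a"
          using i by (cases i) auto
        then have "cinner x (string_vec i) = cinner x (matpow Bs j *v (matpow Bs (a - j) *v v))"
          by (simp add: string_vec_def flip: matpow_add_vec)
        also have "\<dots> = cinner (matpow B j *v x) (matpow Bs (a - j) *v v)"
          by (simp add: cinner_adjoint_matpow)
        finally show ?thesis
          using x by simp
      qed
      then show "x \<in> vec.span (string_vec ` ?J)"
        by (intro orth_basis_span [OF basis]) auto
    qed
  qed
  then show ?thesis
    using orth_basis_dim_span [OF basis] by simp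
qed

end

section \<open>Unitary similarity\<close>

lemma card_Sigma_atMost_less_Suc:
  fixes l :: "'a \<Rightarrow> nat"
  assumes "finite F"
  shows "card {i \<in> Sigma F (\<lambda>v. {..l v}). snd i < Suc j}
       = card {i \<in> Sigma F (\<lambda>v. {..l v}). snd i < j} + card {v\<in>F. j \<le> l v}"
proof -
  have "{i \<in> Sigma F (\<lambda>v. {..l v}). snd i < Suc j}
      = {i \<in> Sigma F (\<lambda>v. {..l v}). snd i < j} \<union> (\<lambda>v. (v, j)) ` {v\<in>F. j \<le> l v}"
    by (auto simp: less_Suc_eq)
  moreover have "card ((\<lambda>v. (v, j)) ` {v\<in>F. j \<le> l v}) = card {v\<in>F. j \<le> l v}"
    by (intro card_image) (auto simp: inj_on_def)
  moreover have "card ({i \<in> Sigma F (\<lambda>v. {..l v}). snd i < j} \<union> (\<lambda>v. (v, j)) ` {v\<in>F. j \<le> l v})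
      = card {i \<in> Sigma F (\<lambda>v. {..l v}). snd i < j} + card ((\<lambda>v. (v, j)) ` {v\<in>F. j \<le> l v})"
    using assms by (intro card_Un_disjoint) auto
  ultimately show ?thesis
    by simp
qed

lemma card_level_eq_if_card_Sigma_eq:
  fixes l :: "'a \<Rightarrow> nat" and l' :: "'b \<Rightarrow> nat"
  assumes "finite F" "finite F'"
    and "\<forall>j. card {i \<in> Sigma F (\<lambda>v. {..l v}). snd i < j} = card {i \<in> Sigma F' (\<lambda>v. {..l' v}). snd i < j}"
  shows "card {v\<in>F. l v = m} = card {v\<in>F'. l' v = m}"
proof -
  have ge: "card {v\<in>F. j \<le> l v} = card {v\<in>F'. j \<le> l' v}" for j
    using card_Sigma_atMost_less_Suc [OF assms(1), of l j] card_Sigma_atMost_less_Suc [OF assms(2), of l' j]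
      assms(3) [rule_format, of j] assms(3) [rule_format, of "Suc j"]
    by linarith
  have level: "card {v\<in>X. l v = m} = card {v\<in>X. m \<le> l v} - card {v\<in>X. Suc m \<le> l v}"
    if "finite X" for X and l :: "'c \<Rightarrow> nat"
  proof -
    have "{v\<in>X. l v = m} = {v\<in>X. m \<le> l v} - {v\<in>X. Suc m \<le> l v}"
      by auto
    then show ?thesis
      using that by (auto intro: card_Diff_subset)
  qed
  show ?thesis
    using level [OF assms(1), of l] level [OF assms(2), of l'] ge [of m] ge [of "Suc m"] by simp
qed

lemma exists_level_preserving_bij:
  fixes l :: "'a \<Rightarrow> nat" and l' :: "'b \<Rightarrow> nat"
  assumes "finite F" "finite F'"
    and "\<forall>m. card {v\<in>F. l v = m} = card {v\<in>F'. l' v = m}"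
  obtains \<sigma> where "bij_betw \<sigma> F F'" "\<forall>v\<in>F. l' (\<sigma> v) = l v"
proof -
  have "\<forall>m. \<exists>g. bij_betw g {v\<in>F. l v = m} {v\<in>F'. l' v = m}"
    using assms by (auto intro!: finite_same_card_bij)
  then obtain f where f: "\<And>m. bij_betw (f m) {v\<in>F. l v = m} {v\<in>F'. l' v = m}"
    by metis
  define \<sigma> where "\<sigma> v = f (l v) v" for v
  have \<sigma>: "\<sigma> v \<in> F' \<and> l' (\<sigma> v) = l v" if "v \<in> F" for v
    using bij_betwE [OF f [of "l v"]] that by (auto simp: \<sigma>_def)
  have "inj_on \<sigma> F"
  proof (rule inj_onI)
    fix v w assume "v \<in> F" "w \<in> F" "\<sigma> v = \<sigma> w"
    moreover from this have "l v = l w"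
      using \<sigma> by metis
    ultimately show "v = w"
      using bij_betw_imp_inj_on [OF f [of "l v"]] by (auto simp: \<sigma>_def inj_on_def)
  qed
  moreover have "F' \<subseteq> \<sigma> ` F"
  proof
    fix w assume "w \<in> F'"
    then obtain v where "v \<in> F" "l v = l' w" "w = f (l' w) v"
      using bij_betw_imp_surj_on [OF f [of "l' w"]] by blast
    then have "w = \<sigma> v"
      by (simp add: \<sigma>_def)
    with \<open>v \<in> F\<close> show "w \<in> \<sigma> ` F"
      by blast
  qed
  ultimately have "bij_betw \<sigma> F F'"
    using \<sigma> by (auto simp: bij_betw_def)
  then show ?thesis
    using that \<sigma> by blast
qed

locale ladder_pair = L: ladder B k + L': ladder B' k'
  for B B' :: "complex^'n^'n" and k k' :: nat
begin

lemma obtain_matching_strings: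
  assumes "\<forall>j. vec.dim {x. matpow B j *v x = 0} = vec.dim {x. matpow B' j *v x = 0}"
  obtains F F' \<sigma> where "L.primitive_orthonormal F" "orth_basis (L.string_index F) L.string_vec"
    and "L'.primitive_orthonormal F'"
    and "bij_betw \<sigma> F F'" "\<forall>v\<in>F. L'.weight (\<sigma> v) = L.weight v"
proof -
  obtain F where F: "L.primitive_orthonormal F" "orth_basis (L.string_index F) L.string_vec"
    using L.exists_string_basis by blast
  obtain F' where F': "L'.primitive_orthonormal F'" "orth_basis (L'.string_index F') L'.string_vec"
    using L'.exists_string_basis by blast
  have fin: "finite F" "finite F'"
    using F(1) F'(1) orthonormal_finite_card
    by (auto simp: L.primitive_orthonormal_def L'.primitive_orthonormal_def)
  have "\<forall>m. card {v\<in>F. L.weight v = m} = card {v\<in>F'. L'.weight v = m}"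
    using card_level_eq_if_card_Sigma_eq [OF fin] assms
      L.dim_kernel_matpow [OF F] L'.dim_kernel_matpow [OF F']
    by (simp add: L.string_index_def L'.string_index_def)
  then obtain \<sigma> where "bij_betw \<sigma> F F'" "\<forall>v\<in>F. L'.weight (\<sigma> v) = L.weight v"
    by (rule exists_level_preserving_bij [OF fin])
  then show ?thesis
    by (rule that [OF F F'(1)])
qed

lemma unitary_intertwiner:
  assumes F: "L.primitive_orthonormal F" "orth_basis (L.string_index F) L.string_vec"
    and F': "L'.primitive_orthonormal F'"
    and \<sigma>: "bij_betw \<sigma> F F'" "\<forall>v\<in>F. L'.weight (\<sigma> v) = L.weight v"
  shows "\<exists>U. unitary_mat U \<and> U ** L.Bs = L'.Bs ** U"
proof -
  let ?I = "L.string_index F"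
  define c where "c = (\<lambda>(v, a). L'.string_vec (\<sigma> v, a))"
  define U where "U = basis_map ?I L.string_vec c"
  have "cinner (c i) (c j) = cinner (L.string_vec i) (L.string_vec j)"
    if ij: "i \<in> ?I" "j \<in> ?I" for i j
  proof -
    obtain v a w b where vw: "i = (v, a)" "j = (w, b)" "v \<in> F" "w \<in> F"
      using ij by (cases i, cases j) (auto simp: L.string_index_def)
    moreover have "\<sigma> v = \<sigma> w \<longleftrightarrow> v = w"
      using \<sigma>(1) vw by (auto simp: bij_betw_def inj_on_def)
    ultimately show ?thesis
      using \<sigma> L.cinner_string_vec [OF F(1)] L'.cinner_string_vec [OF F']
      by (auto simp: c_def bij_betw_def)
  qed
  then have "unitary_mat U"
    unfolding U_def using F(2) by (intro unitary_basis_map) auto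
  moreover have "(U ** L.Bs) *v L.string_vec i = (L'.Bs ** U) *v L.string_vec i" if i_in: "i \<in> ?I" for i
  proof -
    obtain v a where i: "i = (v, a)" "v \<in> F" "a \<le> L.weight v"
      using i_in by (cases i) (auto simp: L.string_index_def)
    have "U *v L.string_vec (v, Suc a) = c (v, Suc a)"
    proof (cases "a < L.weight v")
      case True
      then show ?thesis
        using F(2) i by (auto simp: U_def L.string_index_def intro: orth_basis_basis_map)
    next
      case False
      have "L.primitive v" "L'.primitive (\<sigma> v)"
        using F(1) F' \<sigma> i(2) by (auto simp: L.primitive_orthonormal_def
            L'.primitive_orthonormal_def bij_betw_def)
      then show ?thesis
        using False \<sigma>(2) i by (simp add: c_def L.string_vec_eq_0 L'.string_vec_eq_0)
    qed
    moreover have "U *v L.string_vec i = c i"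
      using F(2) i_in by (simp add: U_def orth_basis_basis_map)
    ultimately show ?thesis
      by (simp add: i c_def L.string_vec_def L'.string_vec_def matpow_Suc_vec
          flip: matrix_vector_mul_assoc)
  qed
  then have "U ** L.Bs = L'.Bs ** U"
    by (intro orth_basis_matrix_eq [OF F(2)]) auto
  ultimately show ?thesis
    by blast
qed

lemma unitarily_similar:
  assumes "\<forall>j. vec.dim {x. matpow B j *v x = 0} = vec.dim {x. matpow B' j *v x = 0}"
  shows "\<exists>U. unitary_mat U \<and> B' = U ** B ** conj_transpose U"
proof -
  obtain F F' \<sigma> where "L.primitive_orthonormal F" "orth_basis (L.string_index F) L.string_vec"
    and "L'.primitive_orthonormal F'" "bij_betw \<sigma> F F'" "\<forall>v\<in>F. L'.weight (\<sigma> v) = L.weight v"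
    by (rule obtain_matching_strings [OF assms])
  then obtain U where U: "unitary_mat U" "U ** L.Bs = L'.Bs ** U"
    using unitary_intertwiner by blast
  then have "B ** conj_transpose U = conj_transpose U ** B'"
    by (metis conj_transpose_conj_transpose conj_transpose_mult)
  then have "U ** B ** conj_transpose U = (U ** conj_transpose U) ** B'"
    by (metis matrix_mul_assoc)
  then show ?thesis
    using U by (auto simp: unitary_mat_def)
qed

end

lemma dim_kernel_similar:
  fixes A h :: "complex^'n^'n"
  assumes "invertible h"
  shows "vec.dim {x. (h ** A ** matrix_inv h) *v x = 0} = vec.dim {x. A *v x = 0}"
proof -
  have inv_h: "matrix_inv h *v (h *v x) = x" "h *v (matrix_inv h *v x) = x" for x
    using invertible_matrix_inv [OF assms] by (simp_all add: matrix_vector_mul_assoc)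
  have "{x. (h ** A ** matrix_inv h) *v x = 0} = (*v) h ` {x. A *v x = 0}"
  proof
    show "{x. (h ** A ** matrix_inv h) *v x = 0} \<subseteq> (*v) h ` {x. A *v x = 0}"
    proof
      fix x assume "x \<in> {x. (h ** A ** matrix_inv h) *v x = 0}"
      then have "A *v (matrix_inv h *v x) = 0"
        using inv_h(1) [of "A *v (matrix_inv h *v x)"] by (simp flip: matrix_vector_mul_assoc)
      then show "x \<in> (*v) h ` {x. A *v x = 0}"
        using inv_h(2) [of x] by (metis (mono_tags, lifting) image_eqI mem_Collect_eq)
    qed
  qed (auto simp: inv_h simp flip: matrix_vector_mul_assoc)
  then show ?thesis
    using inj_matrix_vector_mult [OF assms]
    by (metis inj_on_subset matrix_vector_mul_linear_gen subset_UNIV vec.dim_image_eq)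
qed

theorem proposition5p8:
  fixes B B' h :: "complex ^'n ^'n" and k :: nat
  assumes "k \<ge> 1"
    and "B ** commutator B (conj_transpose B) = - B"
    and "matpow B k \<noteq> 0"
    and "matpow B (Suc k) = 0"
    and "invertible h"
    and "B' = h ** B ** matrix_inv h"
    and "B' ** commutator B' (conj_transpose B') = - B'"
  shows "\<exists>U. unitary_mat U \<and> B' = U ** B ** matrix_inv U"
proof -
  \<comment> \<open>The hypotheses k \<ge> 1 and B^k \<noteq> 0 only fix the exact nilpotency index.\<close>
  have pow: "matpow B' j = h ** matpow B j ** matrix_inv h" for j
    unfolding assms(6) using assms(5) by (rule matpow_similar)
  have "ladder_pair B B' k k"
    using assms(2,4,7) pow [of "Suc k"] by unfold_locales simp_all
  moreover have "\<forall>j. vec.dim {x. matpow B j *v x = 0} = vec.dim {x. matpow B' j *v x = 0}"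
    by (simp add: pow dim_kernel_similar [OF assms(5)])
  ultimately obtain U where "unitary_mat U" "B' = U ** B ** conj_transpose U"
    using ladder_pair.unitarily_similar by blast
  then show ?thesis
    using unitary_matrix_inv by metis
qed

end
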